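(* Let $P\subseteq\mathbb{R}^2$ be a convex polygon such that $\tau P=P^{\circ}$, and suppose there exist three consecutive vertices $u<v<w$ of $P$ in counterclockwise order such that the line $L_u$ contains both $v$ and $w$. Then $P$ has exactly $6$ vertices.
   Context: $\tau:\mathbb{R}^2\to\mathbb{R}^2$ denotes the $90^\circ$ counterclockwise rotation. The polar of $P$ is $P^{\circ}=\{x\in\mathbb{R}^2: y^\top x\le 1\text{ for all }y\in P\}$. For $u\in\mathbb{R}^2\setminus\{0\}$, $L_u=\{x\in\mathbb{R}^2:(\tau u)^\top x=1\}=\{x\in\mathbb{R}^2:\det(u,x)=1\}$. *)

theory Defs
  imports "HOL-Analysis.Analysis"
begin

definition tau :: "real^2 \<Rightarrow> real^2" where
  "tau x = vector [- (x$2), x$1]"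

definition polar :: "(real^2) set \<Rightarrow> (real^2) set" where
  "polar P = {x. \<forall>y\<in>P. y \<bullet> x \<le> 1}"

definition Lline :: "real^2 \<Rightarrow> (real^2) set" where
  "Lline u = {x. tau u \<bullet> x = 1}"

definition det2 :: "real^2 \<Rightarrow> real^2 \<Rightarrow> real" where
  "det2 a b = a$1 * b$2 - a$2 * b$1"

definition convex_polygon :: "(real^2) set \<Rightarrow> bool" where
  "convex_polygon P \<longleftrightarrow> (\<exists>S. finite S \<and> P = convex hull S) \<and> interior P \<noteq> {}"

definition vertices :: "(real^2) set \<Rightarrow> (real^2) set" where
  "vertices P = {x. x extreme_point_of P}"

text \<open>u, v, w are three consecutive vertices of P in counterclockwise order:
  all are vertices, [u,v] and [v,w] are edges (one-dimensional faces), and the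
  boundary turns left at v.\<close>
definition consecutive_ccw :: "(real^2) set \<Rightarrow> real^2 \<Rightarrow> real^2 \<Rightarrow> real^2 \<Rightarrow> bool" where
  "consecutive_ccw P u v w \<longleftrightarrow>
     u \<in> vertices P \<and> v \<in> vertices P \<and> w \<in> vertices P \<and>
     u \<noteq> v \<and> v \<noteq> w \<and> u \<noteq> w \<and>
     closed_segment u v face_of P \<and> closed_segment v w face_of P \<and>
     det2 (v - u) (w - v) > 0"

end

theory Submission
  imports Defs
begin

text \<open>
  Since \<open>tau x \<bullet> y = det2 x y\<close>, the hypothesis \<open>tau ` P = polar P\<close> says that \<open>det2 x y \<le> 1\<close>
  for all \<open>x, y \<in> P\<close> and that every \<open>z\<close> with \<open>det2 z x \<le> 1\<close> for all \<open>x \<in> P\<close> lies in \<open>P\<close>;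
  in particular \<open>P = -P\<close>. The supporting line of the edge \<open>[u, v]\<close> is a point of the
  polar, hence of the form \<open>tau q\<close> with \<open>q \<in> P\<close> and \<open>det2 q u = det2 q v = 1\<close>, which
  forces \<open>q = u - v\<close>. So \<open>v - u \<in> P\<close>, and as \<open>w \<in> L\<^sub>u\<close> lies on the segment from \<open>v\<close>
  to \<open>v - u\<close>, extremality gives \<open>w = v - u\<close>. Writing \<open>x = a u + b v\<close>, the bounds
  \<open>det2 x y \<le> 1\<close> for \<open>y = \<plusminus>u, \<plusminus>v, \<plusminus>(v - u)\<close> read \<open>|a|, |b|, |a + b| \<le> 1\<close>,
  which describes the hexagon with vertices \<open>\<plusminus>u, \<plusminus>v, \<plusminus>(v - u)\<close>.
\<close>

lemma inner_tau_left: "tau x \<bullet> y = det2 x y"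
  and inner_tau_right: "y \<bullet> tau x = det2 x y"
  by (simp_all add: inner_vec_def sum_2 tau_def det2_def)

lemma tau_inject: "tau x = tau y \<longleftrightarrow> x = y"
  by (auto simp: tau_def vec_eq_iff forall_2)

lemma det2_swap: "det2 x y = - det2 y x"
  by (simp add: det2_def)

lemma det2_simps [simp]:
  "det2 x x = 0"
  "det2 (x - y) z = det2 x z - det2 y z" "det2 z (x - y) = det2 z x - det2 z y"
  "det2 (x + y) z = det2 x z + det2 y z" "det2 z (x + y) = det2 z x + det2 z y"
  "det2 (- x) z = - det2 x z" "det2 z (- x) = - det2 z x"
  "det2 (a *\<^sub>R x) z = a * det2 x z" "det2 z (a *\<^sub>R x) = a * det2 z x"
  by (simp_all add: det2_def algebra_simps)

lemma det2_coordinates: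
  assumes "det2 u v = 1"
  shows "x = det2 x v *\<^sub>R u + det2 u x *\<^sub>R v"
proof -
  have "x$1 = x$1 * det2 u v" "x$2 = x$2 * det2 u v"
    using assms by simp_all
  then show ?thesis
    by (simp add: vec_eq_iff forall_2 det2_def algebra_simps)
qed

lemma eq_diff_if_det2_eq_one:
  assumes "det2 u v = 1" "det2 q u = 1" "det2 q v = 1"
  shows "q = u - v"
  using det2_coordinates[OF assms(1), of q] assms(2,3) det2_swap[of q u] by simp

lemma mem_closed_segment_if_det2:
  assumes "det2 u v = 1" "det2 u w = 1" "det2 v w \<le> 1" "det2 (v - u) (w - v) > 0"
  shows "w \<in> closed_segment v (v - u)"
proof -
  define s where "s = det2 v w"
  have w: "w = v - s *\<^sub>R u"
    using det2_coordinates[OF assms(1), of w] assms(2) det2_swap[of w v]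
    by (simp add: s_def)
  have "det2 (v - u) (w - v) = s"
    using assms(1) det2_swap[of v u] by (simp add: w)
  then have "0 \<le> s" "s \<le> 1"
    using assms(3,4) s_def by auto
  moreover have "w = (1 - s) *\<^sub>R v + s *\<^sub>R (v - u)"
    by (simp add: w algebra_simps)
  ultimately show ?thesis
    unfolding in_segment by blast
qed

lemma det2_le_one_if_tau_image_eq_polar:
  assumes "tau ` P = polar P" "x \<in> P" "y \<in> P"
  shows "det2 x y \<le> 1"
proof -
  have "tau x \<in> polar P"
    using assms by blast
  then show ?thesis
    using assms(3) by (simp add: polar_def inner_tau_right)
qed

lemma uminus_mem_if_tau_image_eq_polar:
  assumes "tau ` P = polar P" "x \<in> P"
  shows "- x \<in> P"
proof -
  have "tau (- x) \<in> polar P"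
    using det2_le_one_if_tau_image_eq_polar[OF assms(1) _ assms(2)]
    by (simp add: polar_def inner_tau_right det2_swap[of x])
  then show ?thesis
    using assms(1) by (metis imageE tau_inject)
qed

lemma extreme_point_of_uminus:
  fixes P :: "'a::real_vector set"
  assumes "x extreme_point_of P" "\<And>y. y \<in> P \<Longrightarrow> - y \<in> P"
  shows "(- x) extreme_point_of P"
  unfolding extreme_point_of_def
proof (intro conjI ballI)
  show "- x \<in> P"
    using assms extreme_point_of_def by blast
  fix a b
  assume "a \<in> P" "b \<in> P"
  have "open_segment (- a) (- b) = uminus ` open_segment a b"
    by (rule open_segment_linear_image) (auto simp: linear_uminus inj_def)
  then have "- x \<in> open_segment a b \<Longrightarrow> x \<in> open_segment (- a) (- b)"
    by (metis image_eqI minus_minus)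
  moreover have "x \<notin> open_segment (- a) (- b)"
    using assms \<open>a \<in> P\<close> \<open>b \<in> P\<close> by (simp add: extreme_point_of_def)
  ultimately show "- x \<notin> open_segment a b"
    by blast
qed

lemma extreme_point_in_closed_segment:
  assumes "x extreme_point_of S" "a \<in> S" "b \<in> S" "x \<in> closed_segment a b"
  shows "x = a \<or> x = b"
  using assms by (auto simp: extreme_point_of_def closed_segment_eq_open)

text \<open>
  A proper face of a centrally symmetric polyhedron is exposed by a hyperplane
  \<open>{x. a \<bullet> x = b}\<close>, and symmetry forces \<open>b > 0\<close>, so that \<open>a / b\<close> can be normalised to
  lie in the polar.
\<close>

lemma face_of_symmetric_polyhedron_in_polar_hyperplane:
  fixes P F :: "'a::euclidean_space set"
  assumes "polyhedron P" "\<And>x. x \<in> P \<Longrightarrow> - x \<in> P"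
    and "F face_of P" "F \<noteq> {}" "F \<noteq> P"
  obtains c where "\<And>y. y \<in> P \<Longrightarrow> y \<bullet> c \<le> 1" "\<And>x. x \<in> F \<Longrightarrow> x \<bullet> c = 1"
proof -
  have "F exposed_face_of P"
    using assms exposed_face_of_polyhedron by blast
  then obtain a b where a: "P \<subseteq> {x. a \<bullet> x \<le> b}" and F: "F = P \<inter> {x. a \<bullet> x = b}"
    using assms(4,5) exposed_face_of by blast
  have "b > 0"
  proof (rule ccontr)
    obtain x where "x \<in> F"
      using assms(4) by blast
    then have "b \<ge> 0"
      using a F assms(2) by force
    moreover assume "\<not> b > 0"
    ultimately have "b = 0"
      by simp
    have "P \<subseteq> F"
    proof
      fix x
      assume "x \<in> P"
      then have "a \<bullet> x \<le> 0" "a \<bullet> (- x) \<le> 0"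
        using a assms(2) \<open>b = 0\<close> by blast+
      then show "x \<in> F"
        using F \<open>x \<in> P\<close> \<open>b = 0\<close> by simp
    qed
    then show False
      using F assms(5) by blast
  qed
  show thesis
  proof
    show "y \<bullet> (inverse b *\<^sub>R a) \<le> 1" if "y \<in> P" for y
      using a that \<open>b > 0\<close> by (auto simp: inner_commute field_simps)
    show "x \<bullet> (inverse b *\<^sub>R a) = 1" if "x \<in> F" for x
      using F that \<open>b > 0\<close> by (auto simp: inner_commute)
  qed
qed

lemma edge_diff_mem_if_tau_image_eq_polar:
  assumes "polyhedron P" "interior P \<noteq> {}" "tau ` P = polar P"
    and "closed_segment u v face_of P" "det2 u v = 1"
  shows "v - u \<in> P"
proof -
  have symmetric: "\<And>x. x \<in> P \<Longrightarrow> - x \<in> P"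
    using uminus_mem_if_tau_image_eq_polar[OF assms(3)] .
  have "closed_segment u v \<noteq> P"
    using assms(2) interior_closed_segment_ge2[of u v] by auto
  then obtain c where "\<And>y. y \<in> P \<Longrightarrow> y \<bullet> c \<le> 1" "\<And>x. x \<in> closed_segment u v \<Longrightarrow> x \<bullet> c = 1"
    using face_of_symmetric_polyhedron_in_polar_hyperplane[OF assms(1) symmetric assms(4)]
    by (metis ends_in_segment(1) empty_iff)
  then have "c \<in> polar P" "u \<bullet> c = 1" "v \<bullet> c = 1"
    by (auto simp: polar_def)
  then obtain q where "q \<in> P" "det2 q u = 1" "det2 q v = 1"
    using assms(3) inner_tau_right by (metis imageE)
  then have "- q \<in> P" "q = u - v"
    using symmetric eq_diff_if_det2_eq_one[OF assms(5)] by blast+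
  then show ?thesis
    by simp
qed

definition hexagon :: "'a::real_vector \<Rightarrow> 'a \<Rightarrow> 'a set" where
  "hexagon u v = {u, v, v - u, - u, - v, u - v}"

lemma card_hexagon:
  assumes "det2 u v = 1"
  shows "card (hexagon u v) = 6"
proof -
  let ?coords = "\<lambda>x. (det2 x v, det2 u x)"
  have "?coords ` hexagon u v = {(1, 0), (0, 1), (-1, 1), (-1, 0), (0, -1), (1, -1)}"
    using assms det2_swap[of v u] by (simp add: hexagon_def)
  then have "card (?coords ` hexagon u v) = 6"
    by simp
  moreover have "card (?coords ` hexagon u v) \<le> card (hexagon u v)"
    by (rule card_image_le) (simp add: hexagon_def)
  moreover have "card (hexagon u v) \<le> 6"
    using card_length[of "[u, v, v - u, - u, - v, u - v]"] by (simp add: hexagon_def)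
  ultimately show ?thesis
    by linarith
qed

lemma mem_convex_origin_triangle:
  assumes "convex C" "0 \<in> C" "p \<in> C" "q \<in> C" "a \<ge> 0" "b \<ge> 0" "a + b \<le> 1"
  shows "a *\<^sub>R p + b *\<^sub>R q \<in> C"
proof -
  have "a *\<^sub>R p + b *\<^sub>R q \<in> convex hull {p, q, 0}"
    unfolding convex_hull_3 using assms(5-7)
    by (intro CollectI exI[of _ a] exI[of _ b] exI[of _ "1 - a - b"]) simp
  moreover have "convex hull {p, q, 0} \<subseteq> C"
    using assms(1-4) by (simp add: hull_minimal)
  ultimately show ?thesis
    by blast
qed

text \<open>The hexagon is the union of the six triangles spanned by \<open>0\<close> and an edge.\<close>

lemma mem_convex_hull_hexagon:
  fixes u v :: "'a::real_vector"
  assumes "\<bar>a\<bar> \<le> 1" "\<bar>b\<bar> \<le> 1" "\<bar>a + b\<bar> \<le> 1"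
  shows "a *\<^sub>R u + b *\<^sub>R v \<in> convex hull hexagon u v"
proof -
  let ?C = "convex hull hexagon u v"
  have C: "convex ?C"
    by simp
  have vertices: "u \<in> ?C" "v \<in> ?C" "v - u \<in> ?C" "- u \<in> ?C" "- v \<in> ?C" "u - v \<in> ?C"
    by (simp_all add: hexagon_def hull_inc)
  have "(1/2) *\<^sub>R u + (1/2) *\<^sub>R (- u) \<in> ?C"
    using convexD[OF C vertices(1,4), of "1/2" "1/2"] by simp
  then have zero: "0 \<in> ?C"
    by (simp add: algebra_simps)
  note triangle = mem_convex_origin_triangle[OF C zero]
  consider "a \<ge> 0" "b \<ge> 0" | "a \<le> 0" "b \<ge> 0" "a + b \<ge> 0" | "a \<le> 0" "b \<ge> 0" "a + b \<le> 0"
    | "a \<le> 0" "b \<le> 0" | "a \<ge> 0" "b \<le> 0" "a + b \<le> 0" | "a \<ge> 0" "b \<le> 0" "a + b \<ge> 0"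
    by linarith
  then show ?thesis
  proof cases
    case 1
    then show ?thesis
      using triangle[OF vertices(1,2), of a b] assms by simp
  next
    case 2
    then show ?thesis
      using triangle[OF vertices(2,3), of "a + b" "- a"] assms by (simp add: algebra_simps)
  next
    case 3
    then show ?thesis
      using triangle[OF vertices(3,4), of b "- (a + b)"] assms by (simp add: algebra_simps)
  next
    case 4
    then show ?thesis
      using triangle[OF vertices(4,5), of "- a" "- b"] assms by simp
  next
    case 5
    then show ?thesis
      using triangle[OF vertices(5,6), of "- (a + b)" a] assms by (simp add: algebra_simps)
  next
    case 6
    then show ?thesis
      using triangle[OF vertices(6,1), of "- b" "a + b"] assms by (simp add: algebra_simps)
  qed
qed

lemma tau_image_eq_polar_imp_eq_convex_hull_hexagon:
  assumes "convex P" "tau ` P = polar P" "u \<in> P" "v \<in> P" "v - u \<in> P" "det2 u v = 1"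
  shows "P = convex hull hexagon u v"
proof
  have "- u \<in> P" "- v \<in> P" "- (v - u) \<in> P"
    using assms(3-5) uminus_mem_if_tau_image_eq_polar[OF assms(2)] by blast+
  then have "hexagon u v \<subseteq> P"
    using assms(3-5) by (simp add: hexagon_def)
  then show "convex hull hexagon u v \<subseteq> P"
    using assms(1) by (simp add: hull_minimal)
  show "P \<subseteq> convex hull hexagon u v"
  proof
    fix x
    assume "x \<in> P"
    then have "det2 x v \<le> 1" "det2 v x \<le> 1" "det2 u x \<le> 1" "det2 x u \<le> 1"
      "det2 (v - u) x \<le> 1" "det2 x (v - u) \<le> 1"
      using det2_le_one_if_tau_image_eq_polar[OF assms(2)] assms(3-5) by blast+
    then have "\<bar>det2 x v\<bar> \<le> 1" "\<bar>det2 u x\<bar> \<le> 1" "\<bar>det2 x v + det2 u x\<bar> \<le> 1"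
      using det2_swap[of x v] det2_swap[of x u] by auto
    from mem_convex_hull_hexagon[OF this, of u v]
    show "x \<in> convex hull hexagon u v"
      using det2_coordinates[OF assms(6), of x] by simp
  qed
qed

lemma extreme_points_convex_hull_hexagon:
  assumes "P = convex hull hexagon u v" "\<And>x. x \<in> P \<Longrightarrow> - x \<in> P"
    and "u extreme_point_of P" "v extreme_point_of P" "(v - u) extreme_point_of P"
  shows "{x. x extreme_point_of P} = hexagon u v"
proof
  show "{x. x extreme_point_of P} \<subseteq> hexagon u v"
    using assms(1) extreme_point_of_convex_hull by blast
  have "(- u) extreme_point_of P" "(- v) extreme_point_of P" "(u - v) extreme_point_of P"
    using extreme_point_of_uminus[OF _ assms(2)] assms(3-5) by (metis minus_diff_eq)+
  then show "hexagon u v \<subseteq> {x. x extreme_point_of P}"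
    using assms(3-5) by (auto simp: hexagon_def)
qed

theorem proposition6:
  fixes P :: "(real^2) set" and u v w :: "real^2"
  assumes "convex_polygon P"
    and "tau ` P = polar P"
    and "consecutive_ccw P u v w"
    and "v \<in> Lline u" and "w \<in> Lline u"
  shows "card (vertices P) = 6"
proof -
  obtain S where "finite S" "P = convex hull S" and "interior P \<noteq> {}"
    using assms(1) unfolding convex_polygon_def by blast
  then have "polyhedron P" "convex P"
    using polytope_imp_polyhedron unfolding polytope_def by auto
  have symmetric: "\<And>x. x \<in> P \<Longrightarrow> - x \<in> P"
    using uminus_mem_if_tau_image_eq_polar[OF assms(2)] .
  have extreme: "u extreme_point_of P" "v extreme_point_of P" "w extreme_point_of P"
    and edge: "closed_segment u v face_of P" and "det2 (v - u) (w - v) > 0" "w \<noteq> v"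
    using assms(3) unfolding consecutive_ccw_def vertices_def by auto
  then have "u \<in> P" "v \<in> P" "w \<in> P"
    by (auto simp: extreme_point_of_def)
  have "det2 u v = 1" "det2 u w = 1"
    using assms(4,5) by (simp_all add: Lline_def inner_tau_left)
  have "v - u \<in> P"
    using edge_diff_mem_if_tau_image_eq_polar \<open>polyhedron P\<close> \<open>interior P \<noteq> {}\<close> assms(2) edge
      \<open>det2 u v = 1\<close> by blast
  have "w = v - u"
    using extreme_point_in_closed_segment[OF extreme(3) \<open>v \<in> P\<close> \<open>v - u \<in> P\<close>]
      mem_closed_segment_if_det2[OF \<open>det2 u v = 1\<close> \<open>det2 u w = 1\<close>]
      det2_le_one_if_tau_image_eq_polar[OF assms(2) \<open>v \<in> P\<close> \<open>w \<in> P\<close>]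
      \<open>det2 (v - u) (w - v) > 0\<close> \<open>w \<noteq> v\<close>
    by blast
  have "P = convex hull hexagon u v"
    using tau_image_eq_polar_imp_eq_convex_hull_hexagon
      \<open>convex P\<close> assms(2) \<open>u \<in> P\<close> \<open>v \<in> P\<close> \<open>v - u \<in> P\<close> \<open>det2 u v = 1\<close> by blast
  then have "vertices P = hexagon u v"
    unfolding vertices_def
    using extreme_points_convex_hull_hexagon symmetric extreme \<open>w = v - u\<close> by blast
  then show ?thesis
    using card_hexagon[OF \<open>det2 u v = 1\<close>] by simp
qed

end
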